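(* Let $\mathcal C$ be a Clifford circuit with linear outcome code and $M$ a positive integer. The Low-Weight Stabilizer Algorithm on input $(\mathcal C,M)$ returns exactly the set of all connected stabilizers of the spacetime code of $\mathcal C$ of weight at most $M$.
   Context: A Clifford circuit on $n$ qubits is a finite sequence of operations, each a unitary Clifford gate or the measurement of a Hermitian $n$-qubit Pauli, each with a level in $\{1,2,\dots\}$; operations of equal level have disjoint supports and levels are nondecreasing; depth $\Delta$ = maximal level. In circuit order the $j$-th measurement measures $S_j$ at level $\ell_j$ ($j=1,\dots,m$); outcome $o_j=0$ for eigenvalue $+1$, $1$ for $-1$. The outcome code $\mathcal O(\mathcal C)$ is the set of outcome bit-strings occurring with nonzero probability for some input state; $\perp$ refers to $(u|v)=\sum u_iv_i\bmod 2$. $\overline{\mathcal P}_N$ is the $N$-qubit Pauli group modulo phases; $U_\ell$ is the product of unitary gates of level $\ell$. Fault operators $F\in\overline{\mathcal P}_{n(\Delta+1)}$ act on qubits $(\ell+0.5,q)$, $0\le\ell\le\Delta$, $1\le q\le n$, with level components $F_{\ell+0.5}$; $\eta_{\ell+0.5}(P)$ is $P$ at level $\ell+0.5$ and $I$ elsewhere. Back-cumulant $\overleftarrow F$: start with $F$; for $\ell=\Delta,\dots,1$ replace $\overleftarrow F_{\ell-0.5}$ by $\overleftarrow F_{\ell-0.5}\cdot U_\ell^{-1}\overleftarrow F_{\ell+0.5}U_\ell$. $F(u)=\prod_j\eta_{\ell_j-0.5}(S_j^{u_j})$. The stabilizers of the spacetime code are the elements of $\{\overleftarrow{F(u)}:u\in\mathcal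 O(\mathcal C)^\perp\}$; the weight of a stabilizer is the number of qubits on which it acts nontrivially. The spacetime graph $G$ has vertex set $\{1,\dots,n\}\times\{0.5,1.5,\dots,\Delta+0.5\}$ (vertex $(q,\ell+0.5)$ identified with qubit $(\ell+0.5,q)$), and for every operation of level $\ell$ acting on qubits $q_1,\dots,q_t$, all vertices $(q_i,\ell-0.5)$, $(q_i,\ell+0.5)$, $i=1,\dots,t$, are pairwise joined by edges. A stabilizer is connected if its support is nonempty and connected in $G$. Low-Weight Stabilizer Algorithm: start with an empty output set; for every vertex $v$ of $G$, let $A$ be the set of vertices at graph distance at most $\lfloor M/2\rfloor$ from $v$, compute a generating set of the subgroup of stabilizers of the spacetime code whose support is contained in $A$, and add to the output every element of this subgroup of weight at most $M$ whose support is nonempty and connected in $G$. *)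

theory Defs
  imports Complex_Main "Jordan_Normal_Form.Matrix"
begin

text \<open>An n-qubit Pauli modulo phases: qubit q (0-based) carries (x_q, z_q), meaning X^x Z^z.
  Valid n-qubit Paulis are trivial on all qubits q \<ge> n.\<close>
type_synonym pauli = "nat \<Rightarrow> bool \<times> bool"

definition pid :: pauli where "pid = (\<lambda>q. (False, False))"

definition pmul :: "pauli \<Rightarrow> pauli \<Rightarrow> pauli" where
  "pmul P Q = (\<lambda>q. (fst (P q) \<noteq> fst (Q q), snd (P q) \<noteq> snd (Q q)))"

definition pvalid :: "nat \<Rightarrow> pauli \<Rightarrow> bool" where
  "pvalid n P \<longleftrightarrow> (\<forall>q\<ge>n. P q = (False, False))"

definition psupp :: "pauli \<Rightarrow> nat set" where
  "psupp P = {q. P q \<noteq> (False, False)}"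

text \<open>The Hermitian matrix (tensor product of I,X,Y,Z) on 2^n dimensional space representing P;
  basis index a encodes bit string (bit a q = value of qubit q).
  Per qubit the operator is i^(x z) X^x Z^z, so that (1,1) gives Y.\<close>
definition pmat :: "nat \<Rightarrow> pauli \<Rightarrow> complex mat" where
  "pmat n P = mat (2^n) (2^n) (\<lambda>(a, b).
     if (\<forall>q<n. bit a q = (bit b q \<noteq> fst (P q)))
     then \<i> ^ card {q. q < n \<and> fst (P q) \<and> snd (P q)}
          * (-1) ^ card {q. q < n \<and> snd (P q) \<and> bit b q}
     else 0)"

definition adj :: "complex mat \<Rightarrow> complex mat" where
  "adj U = mat (dim_col U) (dim_row U) (\<lambda>(i, j). cnj (U $$ (j, i)))"

text \<open>An operation is a unitary Clifford gate given by its support (the qubits it acts on) and its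
  2^n x 2^n matrix, or the measurement of the Hermitian Pauli (-1)^s * pmat P.\<close>
datatype op = Gate "nat set" "complex mat" | Meas bool pauli

fun op_supp :: "op \<Rightarrow> nat set" where
  "op_supp (Gate T U) = T"
| "op_supp (Meas s P) = psupp P"

definition single_X :: "nat \<Rightarrow> pauli" where
  "single_X q = (\<lambda>r. if r = q then (True, False) else (False, False))"
definition single_Z :: "nat \<Rightarrow> pauli" where
  "single_Z q = (\<lambda>r. if r = q then (False, True) else (False, False))"

definition clifford_gate :: "nat \<Rightarrow> nat set \<Rightarrow> complex mat \<Rightarrow> bool" where
  "clifford_gate n T U \<longleftrightarrow>
     U \<in> carrier_mat (2^n) (2^n) \<and>
     U * adj U = 1\<^sub>m (2^n) \<and>
     (\<forall>P. pvalid n P \<longrightarrow> (\<exists>P' c. pvalid n P' \<and> U * pmat n P * adj U = c \<cdot>\<^sub>m pmat n P')) \<and>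
     (\<forall>q<n. q \<notin> T \<longrightarrow> U * pmat n (single_X q) = pmat n (single_X q) * U
                       \<and> U * pmat n (single_Z q) = pmat n (single_Z q) * U)"

fun op_ok :: "nat \<Rightarrow> op \<Rightarrow> bool" where
  "op_ok n (Gate T U) = clifford_gate n T U"
| "op_ok n (Meas s P) = pvalid n P"

text \<open>A circuit is a list of (level, operation) in circuit order.\<close>
type_synonym circuit = "(nat \<times> op) list"

definition wf_circuit :: "nat \<Rightarrow> circuit \<Rightarrow> bool" where
  "wf_circuit n C \<longleftrightarrow>
     (\<forall>(l, g) \<in> set C. 1 \<le> l \<and> op_supp g \<subseteq> {..<n} \<and> op_ok n g) \<and>
     sorted (map fst C) \<and>
     (\<forall>i j. i < j \<and> j < length C \<and> fst (C ! i) = fst (C ! j) \<longrightarrow>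
        op_supp (snd (C ! i)) \<inter> op_supp (snd (C ! j)) = {})"

definition depth :: "circuit \<Rightarrow> nat" where
  "depth C = fold max (map fst C) 0"

definition meas_list :: "circuit \<Rightarrow> (nat \<times> bool \<times> pauli) list" where
  "meas_list C = concat (map (\<lambda>(l, g). case g of Meas s P \<Rightarrow> [(l, s, P)] | Gate T U \<Rightarrow> []) C)"

text \<open>Projector onto the eigenspace of (-1)^s pmat P with eigenvalue (-1)^o.\<close>
definition proj :: "nat \<Rightarrow> bool \<Rightarrow> pauli \<Rightarrow> bool \<Rightarrow> complex mat" where
  "proj n s P b = (1 / 2) \<cdot>\<^sub>m (1\<^sub>m (2^n) +
      ((if s \<noteq> b then -1 else 1) :: complex) \<cdot>\<^sub>m pmat n P)"

fun kraus :: "nat \<Rightarrow> circuit \<Rightarrow> bool list \<Rightarrow> complex mat" where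
  "kraus n [] os = 1\<^sub>m (2^n)"
| "kraus n ((l, Gate T U) # C) os = kraus n C os * U"
| "kraus n ((l, Meas s P) # C) [] = 0\<^sub>m (2^n) (2^n)"
| "kraus n ((l, Meas s P) # C) (b # os) = kraus n C os * proj n s P b"

definition vnorm2 :: "complex vec \<Rightarrow> real" where
  "vnorm2 v = (\<Sum>i<dim_vec v. (cmod (v $ i))^2)"

definition outcome_prob :: "nat \<Rightarrow> circuit \<Rightarrow> complex vec \<Rightarrow> bool list \<Rightarrow> real" where
  "outcome_prob n C psi os = vnorm2 (kraus n C os *\<^sub>v psi)"

definition outcome_code :: "nat \<Rightarrow> circuit \<Rightarrow> bool list set" where
  "outcome_code n C = {os. length os = length (meas_list C) \<and>
      (\<exists>psi. psi \<in> carrier_vec (2^n) \<and> vnorm2 psi = 1 \<and> outcome_prob n C psi os > 0)}"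

definition linear_code :: "nat \<Rightarrow> bool list set \<Rightarrow> bool" where
  "linear_code m Oc \<longleftrightarrow> (\<forall>u\<in>Oc. length u = m) \<and> replicate m False \<in> Oc \<and>
      (\<forall>u\<in>Oc. \<forall>v\<in>Oc. map2 (\<noteq>) u v \<in> Oc)"

definition perp :: "nat \<Rightarrow> bool list set \<Rightarrow> bool list set" where
  "perp m Oc = {u. length u = m \<and>
      (\<forall>w\<in>Oc. even (card {i. i < m \<and> u ! i \<and> w ! i}))}"

text \<open>A fault operator F: F h is the Pauli at half-level h + 0.5 (h = 0..depth).\<close>
type_synonym fault = "nat \<Rightarrow> pauli"

definition fmul :: "fault \<Rightarrow> fault \<Rightarrow> fault" where
  "fmul F G = (\<lambda>h. pmul (F h) (G h))"

definition fid :: fault where "fid = (\<lambda>h. pid)"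

definition level_unitary :: "nat \<Rightarrow> circuit \<Rightarrow> nat \<Rightarrow> complex mat" where
  "level_unitary n C l = foldr (\<lambda>(l', g) M. case g of
        Gate T U \<Rightarrow> (if l' = l then U * M else M) | Meas s P \<Rightarrow> M) C (1\<^sub>m (2^n))"

definition conj_pauli :: "nat \<Rightarrow> complex mat \<Rightarrow> pauli \<Rightarrow> pauli" where
  "conj_pauli n U P = (THE P'. pvalid n P' \<and> (\<exists>c. adj U * pmat n P * U = c \<cdot>\<^sub>m pmat n P'))"

text \<open>bc_rev k is the back-cumulant at half-level index depth - k.\<close>
fun bc_rev :: "nat \<Rightarrow> circuit \<Rightarrow> fault \<Rightarrow> nat \<Rightarrow> pauli" where
  "bc_rev n C F 0 = F (depth C)"
| "bc_rev n C F (Suc k) = pmul (F (depth C - Suc k))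
      (conj_pauli n (level_unitary n C (depth C - k)) (bc_rev n C F k))"

definition back_cum :: "nat \<Rightarrow> circuit \<Rightarrow> fault \<Rightarrow> fault" where
  "back_cum n C F = (\<lambda>h. if h \<le> depth C then bc_rev n C F (depth C - h) else pid)"

text \<open>F(u) = prod_j eta_{l_j - 0.5}(S_j^{u_j}), i.e. placed at half-level index l_j - 1.\<close>
definition fault_of :: "circuit \<Rightarrow> bool list \<Rightarrow> fault" where
  "fault_of C u = foldr (\<lambda>((l, s, P), b) F.
       if b then (\<lambda>h. if h = l - 1 then pmul P (F h) else F h) else F)
     (zip (meas_list C) u) fid"

definition stabilizers :: "nat \<Rightarrow> circuit \<Rightarrow> fault set" where
  "stabilizers n C = {back_cum n C (fault_of C u) | u.
      u \<in> perp (length (meas_list C)) (outcome_code n C)}"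

text \<open>Support as a set of vertices (q, h) of the spacetime graph; vertex (q, h) is (q, h + 0.5).\<close>
definition fsupp :: "nat \<Rightarrow> circuit \<Rightarrow> fault \<Rightarrow> (nat \<times> nat) set" where
  "fsupp n C F = {(q, h). q < n \<and> h \<le> depth C \<and> F h q \<noteq> (False, False)}"

definition weight :: "nat \<Rightarrow> circuit \<Rightarrow> fault \<Rightarrow> nat" where
  "weight n C F = card (fsupp n C F)"

definition vertices :: "nat \<Rightarrow> circuit \<Rightarrow> (nat \<times> nat) set" where
  "vertices n C = {..<n} \<times> {..depth C}"

definition edges :: "circuit \<Rightarrow> ((nat \<times> nat) \<times> (nat \<times> nat)) set" where
  "edges C = {(v, w). v \<noteq> w \<and> (\<exists>(l, g) \<in> set C. \<exists>q1 \<in> op_supp g. \<exists>q2 \<in> op_supp g.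
        \<exists>h1 \<in> {l - 1, l}. \<exists>h2 \<in> {l - 1, l}. v = (q1, h1) \<and> w = (q2, h2))}"

definition ball :: "nat \<Rightarrow> circuit \<Rightarrow> nat \<times> nat \<Rightarrow> nat \<Rightarrow> (nat \<times> nat) set" where
  "ball n C v d = {w \<in> vertices n C. \<exists>k\<le>d. (v, w) \<in> edges C ^^ k}"

definition connected_in :: "circuit \<Rightarrow> (nat \<times> nat) set \<Rightarrow> bool" where
  "connected_in C S \<longleftrightarrow> S \<noteq> {} \<and>
     (\<forall>v\<in>S. \<forall>w\<in>S. (v, w) \<in> (edges C \<inter> (S \<times> S))\<^sup>*)"

inductive_set gen_subgroup :: "fault set \<Rightarrow> fault set" for S where
  gen_id: "fid \<in> gen_subgroup S"
| gen_mul: "s \<in> S \<Longrightarrow> t \<in> gen_subgroup S \<Longrightarrow> fmul s t \<in> gen_subgroup S"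

definition lwsa_output :: "nat \<Rightarrow> circuit \<Rightarrow> nat \<Rightarrow> fault set" where
  "lwsa_output n C M = (\<Union>v \<in> vertices n C.
     {s \<in> gen_subgroup {t \<in> stabilizers n C. fsupp n C t \<subseteq> ball n C v (M div 2)}.
        weight n C s \<le> M \<and> connected_in C (fsupp n C s)})"

end

theory Submission
  imports Defs "Jordan_Normal_Form.Determinant"
begin

unbundle bit_operations_syntax

text \<open>
  The stabilizers form a group: u \<mapsto> back-cumulant of F(u) is a homomorphism from the
  orthogonal complement of the outcome code (closed under addition, whatever the code) to the
  fault operators, because F is additive and conjugation by a Clifford unitary induces a
  homomorphism of the Pauli group modulo phases (products of Pauli matrices are scalar multiples
  of Pauli matrices, and a Pauli is determined by any nonzero multiple of its matrix). Hence
  every fault operator generated by the algorithm is a stabilizer.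
  Conversely, a connected set of w vertices contains a vertex from which every vertex of the
  set is reached inside the set in at most w div 2 steps: a vertex of least eccentricity r has
  at least two vertices at each distance 1, ..., r - 1, so w \<ge> 2 r. A connected stabilizer of
  weight at most M therefore lies in the ball of radius M div 2 around such a vertex, where it
  is itself a generator.
\<close>

section \<open>Pauli matrices\<close>

lemma bit_imp_less_of_less_power2: "(a::nat) < 2 ^ n \<Longrightarrow> bit a q \<Longrightarrow> q < n"
  by (metis bit_take_bit_iff take_bit_nat_eq_self_iff)

lemma xor_less_power2: "(a::nat) < 2 ^ n \<Longrightarrow> b < 2 ^ n \<Longrightarrow> a XOR b < 2 ^ n"
  by (metis take_bit_nat_eq_self_iff take_bit_xor)

lemma even_card_xor:
  fixes n :: nat
  shows "even (card {q. q < n \<and> (A q \<noteq> B q)}) \<longleftrightarrow>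
     (even (card {q. q < n \<and> A q}) \<longleftrightarrow> even (card {q. q < n \<and> B q}))"
proof -
  let ?A = "{q. q < n \<and> A q}" and ?B = "{q. q < n \<and> B q}"
  have fin: "finite ?A" "finite ?B" by simp_all
  have xor_set: "{q. q < n \<and> (A q \<noteq> B q)} = (?A \<union> ?B) - (?A \<inter> ?B)" by auto
  have "card {q. q < n \<and> (A q \<noteq> B q)} = card (?A \<union> ?B) - card (?A \<inter> ?B)"
    unfolding xor_set using fin by (intro card_Diff_subset) auto
  moreover have "card (?A \<union> ?B) + card (?A \<inter> ?B) = card ?A + card ?B"
    using card_Un_Int[OF fin] by simp
  moreover have "card (?A \<inter> ?B) \<le> card (?A \<union> ?B)"
    using fin by (intro card_mono) auto
  ultimately show ?thesis by presburger
qed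

lemma minus_one_power_card_xor:
  fixes n :: nat
  shows "(-1 :: 'a :: ring_1) ^ card {q. q < n \<and> (A q \<noteq> B q)} =
     (-1) ^ card {q. q < n \<and> A q} * (-1) ^ card {q. q < n \<and> B q}"
  using even_card_xor[of n A B] by (simp add: minus_one_power_iff)

lemma pvalid_pmul: "pvalid n P \<Longrightarrow> pvalid n Q \<Longrightarrow> pvalid n (pmul P Q)"
  by (simp add: pvalid_def pmul_def)

definition pauli_xbits :: "nat \<Rightarrow> pauli \<Rightarrow> nat" where
  "pauli_xbits n P = horner_sum of_bool 2 (map (\<lambda>q. fst (P q)) [0..<n])"

lemma bit_pauli_xbits: "bit (pauli_xbits n P) q \<longleftrightarrow> q < n \<and> fst (P q)"
  by (auto simp: pauli_xbits_def bit_horner_sum_bit_iff)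

lemma pauli_xbits_less: "pauli_xbits n P < 2 ^ n"
  by (metis bit_pauli_xbits bit_take_bit_iff bit_eq_iff take_bit_nat_less_exp)

lemma pauli_xbits_pmul: "pauli_xbits n (pmul P Q) = pauli_xbits n P XOR pauli_xbits n Q"
  by (auto simp: bit_eq_iff bit_xor_iff bit_pauli_xbits pmul_def)

definition pauli_phase :: "nat \<Rightarrow> pauli \<Rightarrow> nat \<Rightarrow> complex" where
  "pauli_phase n P b = \<i> ^ card {q. q < n \<and> fst (P q) \<and> snd (P q)}
     * (-1) ^ card {q. q < n \<and> snd (P q) \<and> bit b q}"

lemma pauli_phase_nonzero: "pauli_phase n P b \<noteq> 0"
  by (simp add: pauli_phase_def)

lemma pmat_carrier [simp]: "pmat n P \<in> carrier_mat (2 ^ n) (2 ^ n)"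
  and dim_row_pmat [simp]: "dim_row (pmat n P) = 2 ^ n"
  and dim_col_pmat [simp]: "dim_col (pmat n P) = 2 ^ n"
  by (simp_all add: pmat_def)

lemma pmat_entry:
  assumes "a < 2 ^ n" and "b < 2 ^ n"
  shows "pmat n P $$ (a, b) = (if a = b XOR pauli_xbits n P then pauli_phase n P b else 0)"
proof -
  have "(\<forall>q<n. bit a q = (bit b q \<noteq> fst (P q))) \<longleftrightarrow> a = b XOR pauli_xbits n P"
    using assms bit_imp_less_of_less_power2[of a n] bit_imp_less_of_less_power2[of b n]
    by (auto simp: bit_eq_iff bit_xor_iff bit_pauli_xbits)
  then show ?thesis
    using assms by (simp add: pmat_def pauli_phase_def)
qed

definition pmul_phase :: "nat \<Rightarrow> pauli \<Rightarrow> pauli \<Rightarrow> complex" where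
  "pmul_phase n P Q =
     \<i> ^ card {q. q < n \<and> fst (P q) \<and> snd (P q)} * \<i> ^ card {q. q < n \<and> fst (Q q) \<and> snd (Q q)}
     * (-1) ^ card {q. q < n \<and> snd (P q) \<and> fst (Q q)}
     / \<i> ^ card {q. q < n \<and> fst (pmul P Q q) \<and> snd (pmul P Q q)}"

lemma pmul_phase_nonzero: "pmul_phase n P Q \<noteq> 0"
  by (simp add: pmul_phase_def)

lemma pauli_phase_mult:
  "pauli_phase n P (b XOR pauli_xbits n Q) * pauli_phase n Q b =
     pmul_phase n P Q * pauli_phase n (pmul P Q) b"
proof -
  have "{q. q < n \<and> snd (P q) \<and> bit (b XOR pauli_xbits n Q) q} =
      {q. q < n \<and> ((snd (P q) \<and> bit b q) \<noteq> (snd (P q) \<and> fst (Q q)))}"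
    by (auto simp: bit_xor_iff bit_pauli_xbits)
  then have sign_P: "(-1::complex) ^ card {q. q < n \<and> snd (P q) \<and> bit (b XOR pauli_xbits n Q) q} =
      (-1) ^ card {q. q < n \<and> snd (P q) \<and> bit b q} * (-1) ^ card {q. q < n \<and> snd (P q) \<and> fst (Q q)}"
    by (simp only: minus_one_power_card_xor)
  have "{q. q < n \<and> snd (pmul P Q q) \<and> bit b q} =
      {q. q < n \<and> ((snd (P q) \<and> bit b q) \<noteq> (snd (Q q) \<and> bit b q))}"
    by (auto simp: pmul_def)
  then have sign_PQ: "(-1::complex) ^ card {q. q < n \<and> snd (pmul P Q q) \<and> bit b q} =
      (-1) ^ card {q. q < n \<and> snd (P q) \<and> bit b q} * (-1) ^ card {q. q < n \<and> snd (Q q) \<and> bit b q}"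
    by (simp only: minus_one_power_card_xor)
  show ?thesis
    unfolding pauli_phase_def pmul_phase_def sign_P sign_PQ by simp
qed

lemma pmat_mult_pmat: "pmat n P * pmat n Q = pmul_phase n P Q \<cdot>\<^sub>m pmat n (pmul P Q)"
proof (rule eq_matI)
  fix a b assume "a < dim_row (pmul_phase n P Q \<cdot>\<^sub>m pmat n (pmul P Q))"
    and "b < dim_col (pmul_phase n P Q \<cdot>\<^sub>m pmat n (pmul P Q))"
  then have a: "a < 2 ^ n" and b: "b < 2 ^ n" by simp_all
  define k0 where "k0 = b XOR pauli_xbits n Q"
  have k0: "k0 < 2 ^ n" unfolding k0_def using b pauli_xbits_less by (rule xor_less_power2)
  have "(pmat n P * pmat n Q) $$ (a, b) = (\<Sum>k<2 ^ n. pmat n P $$ (a, k) * pmat n Q $$ (k, b))"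
    using a b by (simp add: scalar_prod_def lessThan_atLeast0)
  also have "\<dots> = (\<Sum>k<2 ^ n. if k = k0 then pmat n P $$ (a, k0) * pauli_phase n Q b else 0)"
    using a b by (intro sum.cong) (auto simp: pmat_entry k0_def)
  also have "\<dots> = pmat n P $$ (a, k0) * pauli_phase n Q b"
    using k0 by simp
  also have "\<dots> = pmul_phase n P Q * pmat n (pmul P Q) $$ (a, b)"
    using a b k0
    by (simp add: pmat_entry k0_def pauli_xbits_pmul pauli_phase_mult xor.assoc xor.commute xor.left_commute)
  finally show "(pmat n P * pmat n Q) $$ (a, b) = (pmul_phase n P Q \<cdot>\<^sub>m pmat n (pmul P Q)) $$ (a, b)"
    using a b by simp
qed simp_all

lemma pauli_phase_power2:
  assumes "q < n"
  shows "pauli_phase n P (2 ^ q) = (if snd (P q) then - pauli_phase n P 0 else pauli_phase n P 0)"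
proof -
  have "{r. r < n \<and> snd (P r) \<and> bit ((2::nat) ^ q) r} = (if snd (P q) then {q} else {})"
    using assms by (auto simp: bit_exp_iff)
  then show ?thesis by (simp add: pauli_phase_def)
qed

lemma pmat_xbits_0: "pmat n P $$ (pauli_xbits n P, 0) = pauli_phase n P 0"
  by (simp add: pmat_entry pauli_xbits_less)

lemma pmat_nonzero: "pmat n P \<noteq> 0\<^sub>m (2 ^ n) (2 ^ n)"
proof
  assume "pmat n P = 0\<^sub>m (2 ^ n) (2 ^ n)"
  then have "pmat n P $$ (pauli_xbits n P, 0) = 0" by (simp add: pauli_xbits_less)
  then show False by (simp add: pmat_xbits_0 pauli_phase_nonzero)
qed

lemma pmat_smult_eq_imp_eq:
  assumes "pvalid n P" and "pvalid n Q" and eq: "c \<cdot>\<^sub>m pmat n P = d \<cdot>\<^sub>m pmat n Q" and "c \<noteq> 0"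
  shows "P = Q"
proof -
  have entries: "c * pmat n P $$ (a, b) = d * pmat n Q $$ (a, b)" if "a < 2 ^ n" "b < 2 ^ n" for a b
    using arg_cong[OF eq, of "\<lambda>A. A $$ (a, b)"] that by simp
  have xbits: "pauli_xbits n P = pauli_xbits n Q"
    using entries[of "pauli_xbits n P" 0] \<open>c \<noteq> 0\<close>
    by (auto simp: pmat_entry pauli_xbits_less pauli_phase_nonzero split: if_splits)
  have phases: "c * pauli_phase n P b = d * pauli_phase n Q b" if "b < 2 ^ n" for b
    using entries[of "b XOR pauli_xbits n P" b] that xbits
    by (simp add: pmat_entry xor_less_power2 pauli_xbits_less)
  have agree: "fst (P q) = fst (Q q) \<and> snd (P q) = snd (Q q)" if "q < n" for q
  proof
    show "fst (P q) = fst (Q q)" using xbits that by (metis bit_pauli_xbits)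
    have "c * pauli_phase n P 0 \<noteq> 0" using \<open>c \<noteq> 0\<close> by (simp add: pauli_phase_nonzero)
    then show "snd (P q) = snd (Q q)"
      using phases[of 0] phases[of "2 ^ q"] that
      by (auto simp: pauli_phase_power2 split: if_splits)
  qed
  show ?thesis
  proof
    fix q
    show "P q = Q q"
      using agree[of q] assms(1,2) by (cases "q < n") (auto simp: pvalid_def prod_eq_iff)
  qed
qed

section \<open>Clifford unitaries\<close>

lemma smult_smult_mat: "(a :: 'a :: semigroup_mult) \<cdot>\<^sub>m (b \<cdot>\<^sub>m A) = (a * b) \<cdot>\<^sub>m A"
  by (rule eq_matI) (auto simp: mult.assoc)

lemma smult_mult_smult_mat:
  fixes A B :: "'a :: comm_semiring_0 mat"
  assumes "A \<in> carrier_mat nr n" and "B \<in> carrier_mat n nc"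
  shows "(a \<cdot>\<^sub>m A) * (b \<cdot>\<^sub>m B) = (a * b) \<cdot>\<^sub>m (A * B)"
  using assms by (subst mult_smult_assoc_mat[of A nr n "b \<cdot>\<^sub>m B" nc])
    (auto simp: mult_smult_distrib smult_smult_mat)

lemma one_smult_mat [simp]: "(1 :: 'a :: monoid_mult) \<cdot>\<^sub>m A = A"
  by (rule eq_matI) auto

lemma adj_carrier_mat [simp]: "U \<in> carrier_mat a b \<Longrightarrow> adj U \<in> carrier_mat b a"
  by (simp add: adj_def)

lemma adj_mult: "A \<in> carrier_mat a b \<Longrightarrow> B \<in> carrier_mat b c \<Longrightarrow> adj (A * B) = adj B * adj A"
  by (rule eq_matI) (auto simp: adj_def scalar_prod_def cnj_sum intro!: sum.cong)

lemma adj_one [simp]: "adj (1\<^sub>m k) = 1\<^sub>m k"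
  by (rule eq_matI) (auto simp: adj_def)

lemma sandwich_smult:
  fixes A B X :: "'a :: comm_semiring_0 mat"
  assumes "A \<in> carrier_mat N N" "X \<in> carrier_mat N N" "B \<in> carrier_mat N N"
  shows "A * (c \<cdot>\<^sub>m X) * B = c \<cdot>\<^sub>m (A * X * B)"
  using assms by (simp add: mult_smult_distrib mult_smult_assoc_mat[of _ N N])

context
  fixes A B :: "complex mat" and N :: nat
  assumes A: "A \<in> carrier_mat N N" and B: "B \<in> carrier_mat N N" and inverse: "B * A = 1\<^sub>m N"
begin

lemma sandwich_cancel: "X \<in> carrier_mat N N \<Longrightarrow> B * (A * X * B) * A = X"
proof -
  assume X: "X \<in> carrier_mat N N"
  have "B * (A * X * B) * A = (B * A) * X * (B * A)"
    using A B X by (simp add: assoc_mult_mat[of _ N N _ N _ N])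
  then show ?thesis using X by (simp add: inverse)
qed

lemma sandwich_mult:
  "X \<in> carrier_mat N N \<Longrightarrow> Y \<in> carrier_mat N N \<Longrightarrow> A * (X * Y) * B = (A * X * B) * (A * Y * B)"
proof -
  assume X: "X \<in> carrier_mat N N" and Y: "Y \<in> carrier_mat N N"
  have "(A * X * B) * (A * Y * B) = A * X * (B * A) * Y * B"
    using A B X Y by (simp add: assoc_mult_mat[of _ N N _ N _ N])
  then show ?thesis using A X Y by (simp add: inverse assoc_mult_mat[of _ N N _ N _ N])
qed

end

lemma sandwich_pmat_scalar_nonzero:
  assumes "A \<in> carrier_mat (2 ^ n) (2 ^ n)" "B \<in> carrier_mat (2 ^ n) (2 ^ n)" "B * A = 1\<^sub>m (2 ^ n)"
    and eq: "A * pmat n P * B = c \<cdot>\<^sub>m pmat n P'"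
  shows "c \<noteq> 0"
proof
  assume "c = 0"
  then have "A * pmat n P * B = 0\<^sub>m (2 ^ n) (2 ^ n)"
    using eq by (auto simp: pmat_def)
  then have "pmat n P = B * 0\<^sub>m (2 ^ n) (2 ^ n) * A"
    using sandwich_cancel[OF assms(1-3), of "pmat n P"] by simp
  then show False using assms(1,2) pmat_nonzero by simp
qed

definition clifford_unitary :: "nat \<Rightarrow> complex mat \<Rightarrow> bool" where
  "clifford_unitary n W \<longleftrightarrow> W \<in> carrier_mat (2 ^ n) (2 ^ n) \<and>
     adj W * W = 1\<^sub>m (2 ^ n) \<and> W * adj W = 1\<^sub>m (2 ^ n) \<and>
     (\<forall>P. pvalid n P \<longrightarrow> (\<exists>P' c. pvalid n P' \<and> adj W * pmat n P * W = c \<cdot>\<^sub>m pmat n P'))"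

lemma clifford_unitary_one: "clifford_unitary n (1\<^sub>m (2 ^ n))"
proof -
  have "adj (1\<^sub>m (2 ^ n)) * pmat n P * 1\<^sub>m (2 ^ n) = 1 \<cdot>\<^sub>m pmat n P" for P
    by simp
  then show ?thesis
    unfolding clifford_unitary_def by (intro conjI allI impI exI) auto
qed

lemma clifford_unitary_mult:
  assumes A: "clifford_unitary n A" and B: "clifford_unitary n B"
  shows "clifford_unitary n (A * B)"
proof -
  let ?N = "2 ^ n :: nat"
  have carr: "A \<in> carrier_mat ?N ?N" "B \<in> carrier_mat ?N ?N" "adj A \<in> carrier_mat ?N ?N" "adj B \<in> carrier_mat ?N ?N"
    using A B by (auto simp: clifford_unitary_def)
  have adj_AB: "adj (A * B) = adj B * adj A" using carr by (simp add: adj_mult)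
  have "adj (A * B) * (A * B) = adj B * (adj A * A) * B"
    using carr by (simp add: adj_AB assoc_mult_mat[of _ ?N ?N _ ?N _ ?N] mult_carrier_mat[of _ ?N ?N])
  then have left: "adj (A * B) * (A * B) = 1\<^sub>m ?N"
    using A B carr by (simp add: clifford_unitary_def right_mult_one_mat[of "adj B" ?N ?N])
  have "(A * B) * adj (A * B) = A * (B * adj B) * adj A"
    using carr by (simp add: adj_AB assoc_mult_mat[of _ ?N ?N _ ?N _ ?N] mult_carrier_mat[of _ ?N ?N])
  then have right: "(A * B) * adj (A * B) = 1\<^sub>m ?N"
    using A B carr by (simp add: clifford_unitary_def right_mult_one_mat[of A ?N ?N])
  have "\<exists>P'' c. pvalid n P'' \<and> adj (A * B) * pmat n P * (A * B) = c \<cdot>\<^sub>m pmat n P''"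
    if "pvalid n P" for P
  proof -
    obtain P' c where P': "pvalid n P'" "adj A * pmat n P * A = c \<cdot>\<^sub>m pmat n P'"
      using A \<open>pvalid n P\<close> by (auto simp: clifford_unitary_def)
    obtain P'' d where P'': "pvalid n P''" "adj B * pmat n P' * B = d \<cdot>\<^sub>m pmat n P''"
      using B \<open>pvalid n P'\<close> by (auto simp: clifford_unitary_def)
    have "adj (A * B) * pmat n P * (A * B) = adj B * (adj A * pmat n P * A) * B"
      using carr by (simp add: adj_AB assoc_mult_mat[of _ ?N ?N _ ?N _ ?N] mult_carrier_mat[of _ ?N ?N])
    also have "\<dots> = c \<cdot>\<^sub>m (adj B * pmat n P' * B)"
      using carr by (simp add: P'(2) sandwich_smult[of _ ?N])
    also have "\<dots> = (c * d) \<cdot>\<^sub>m pmat n P''"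
      by (simp add: P''(2) smult_smult_mat)
    finally show ?thesis using P''(1) by blast
  qed
  with left right carr show ?thesis by (simp add: clifford_unitary_def)
qed

lemma finite_pvalid: "finite {P. pvalid n P}"
proof (rule finite_imageD)
  show "finite ((\<lambda>P. map P [0..<n]) ` {P. pvalid n P})"
    by (rule finite_subset[OF _ finite_lists_length_eq[of UNIV n]]) auto
  show "inj_on (\<lambda>P. map P [0..<n]) {P. pvalid n P}"
  proof (rule inj_onI, rule ext)
    fix P Q q
    assume "P \<in> {P. pvalid n P}" "Q \<in> {P. pvalid n P}" "map P [0..<n] = map Q [0..<n]"
    then show "P q = Q q" by (cases "q < n") (auto simp: pvalid_def map_eq_conv)
  qed
qed

text \<open>Conjugation by U maps Paulis to Paulis injectively, hence (there being finitely many
  Paulis) surjectively; so conjugation by the inverse of U maps Paulis to Paulis as well.\<close>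
lemma adj_conj_pauli_exists:
  assumes U: "U \<in> carrier_mat (2 ^ n) (2 ^ n)" and unitary: "adj U * U = 1\<^sub>m (2 ^ n)"
    and conj: "\<And>P. pvalid n P \<Longrightarrow> \<exists>P' c. pvalid n P' \<and> U * pmat n P * adj U = c \<cdot>\<^sub>m pmat n P'"
    and "pvalid n P"
  shows "\<exists>P' c. pvalid n P' \<and> adj U * pmat n P * U = c \<cdot>\<^sub>m pmat n P'"
proof -
  let ?V = "{P. pvalid n P}"
  have adj_U: "adj U \<in> carrier_mat (2 ^ n) (2 ^ n)" using U by simp
  define f where "f P = (SOME P'. pvalid n P' \<and> (\<exists>c. U * pmat n P * adj U = c \<cdot>\<^sub>m pmat n P'))" for P
  have f: "pvalid n (f P) \<and> (\<exists>c. U * pmat n P * adj U = c \<cdot>\<^sub>m pmat n (f P))" if "pvalid n P" for P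
  proof -
    have "\<exists>P'. pvalid n P' \<and> (\<exists>c. U * pmat n P * adj U = c \<cdot>\<^sub>m pmat n P')"
      using conj[OF that] by blast
    then show ?thesis unfolding f_def by (rule someI_ex)
  qed
  have unconjugate: "pmat n Q = c \<cdot>\<^sub>m (adj U * pmat n P' * U)"
    if "U * pmat n Q * adj U = c \<cdot>\<^sub>m pmat n P'" for Q P' c
  proof -
    have "pmat n Q = adj U * (U * pmat n Q * adj U) * U"
      by (rule sandwich_cancel[OF U adj_U unitary pmat_carrier, symmetric])
    also have "\<dots> = c \<cdot>\<^sub>m (adj U * pmat n P' * U)"
      unfolding that by (rule sandwich_smult[OF adj_U pmat_carrier U])
    finally show ?thesis .
  qed
  have "inj_on f ?V"
  proof (rule inj_onI)
    fix P Q assume P: "P \<in> ?V" and Q: "Q \<in> ?V" and "f P = f Q"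
    obtain c where c: "U * pmat n P * adj U = c \<cdot>\<^sub>m pmat n (f P)"
      using f P by blast
    obtain d where d: "U * pmat n Q * adj U = d \<cdot>\<^sub>m pmat n (f P)"
      using f Q \<open>f P = f Q\<close> by auto
    have "d \<noteq> 0" by (rule sandwich_pmat_scalar_nonzero[OF U adj_U unitary d])
    moreover have "d \<cdot>\<^sub>m pmat n P = c \<cdot>\<^sub>m pmat n Q"
      unfolding unconjugate[OF c] unconjugate[OF d] smult_smult_mat by (simp only: mult.commute)
    ultimately show "P = Q" using P Q pmat_smult_eq_imp_eq by blast
  qed
  moreover have "f ` ?V \<subseteq> ?V" using f by blast
  ultimately have "f ` ?V = ?V" by (intro endo_inj_surj finite_pvalid)
  then obtain Q where Q: "pvalid n Q" and "P = f Q"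
    using \<open>pvalid n P\<close> by (metis imageE mem_Collect_eq)
  then obtain c where c: "U * pmat n Q * adj U = c \<cdot>\<^sub>m pmat n P" using f by blast
  have "c \<noteq> 0" by (rule sandwich_pmat_scalar_nonzero[OF U adj_U unitary c])
  then have "adj U * pmat n P * U = (1 / c) \<cdot>\<^sub>m pmat n Q"
    by (simp add: unconjugate[OF c] smult_smult_mat)
  with Q show ?thesis by blast
qed

lemma clifford_gate_imp_clifford_unitary:
  assumes "clifford_gate n T U"
  shows "clifford_unitary n U"
proof -
  have U: "U \<in> carrier_mat (2 ^ n) (2 ^ n)" and right: "U * adj U = 1\<^sub>m (2 ^ n)"
    and conj: "\<And>P. pvalid n P \<Longrightarrow> \<exists>P' c. pvalid n P' \<and> U * pmat n P * adj U = c \<cdot>\<^sub>m pmat n P'"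
    using assms unfolding clifford_gate_def by blast+
  have left: "adj U * U = 1\<^sub>m (2 ^ n)"
    using mat_mult_left_right_inverse[OF U adj_carrier_mat[OF U] right] .
  show ?thesis
    unfolding clifford_unitary_def using U left right adj_conj_pauli_exists[OF U left conj] by blast
qed

lemma level_unitary_Cons:
  "level_unitary n ((l', g) # C) l = (case g of
      Gate T U \<Rightarrow> (if l' = l then U * level_unitary n C l else level_unitary n C l)
    | Meas s P \<Rightarrow> level_unitary n C l)"
  by (cases g) (simp_all add: level_unitary_def)

lemma clifford_unitary_level_unitary:
  "\<forall>(l', g) \<in> set C. op_ok n g \<Longrightarrow> clifford_unitary n (level_unitary n C l)"
proof (induction C)
  case Nil
  then show ?case by (simp add: level_unitary_def clifford_unitary_one)
next
  case (Cons x C)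
  obtain l' g where x: "x = (l', g)" by fastforce
  with Cons show ?case
    by (cases g) (auto simp: level_unitary_Cons clifford_unitary_mult clifford_gate_imp_clifford_unitary)
qed

lemma conj_pauli:
  assumes W: "clifford_unitary n W" and P: "pvalid n P"
  shows "pvalid n (conj_pauli n W P)"
    and "\<exists>c. adj W * pmat n P * W = c \<cdot>\<^sub>m pmat n (conj_pauli n W P)"
proof -
  have W_carrier: "W \<in> carrier_mat (2 ^ n) (2 ^ n)" and W_inv: "W * adj W = 1\<^sub>m (2 ^ n)"
    using W by (simp_all add: clifford_unitary_def)
  have "\<exists>!P'. pvalid n P' \<and> (\<exists>c. adj W * pmat n P * W = c \<cdot>\<^sub>m pmat n P')"
  proof (rule ex_ex1I)
    show "\<exists>P'. pvalid n P' \<and> (\<exists>c. adj W * pmat n P * W = c \<cdot>\<^sub>m pmat n P')"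
      using W P by (auto simp: clifford_unitary_def)
  next
    fix P1 P2
    assume "pvalid n P1 \<and> (\<exists>c. adj W * pmat n P * W = c \<cdot>\<^sub>m pmat n P1)"
      and "pvalid n P2 \<and> (\<exists>c. adj W * pmat n P * W = c \<cdot>\<^sub>m pmat n P2)"
    then obtain c1 c2 where "pvalid n P1" "pvalid n P2"
      and c1: "adj W * pmat n P * W = c1 \<cdot>\<^sub>m pmat n P1"
      and c2: "adj W * pmat n P * W = c2 \<cdot>\<^sub>m pmat n P2" by blast
    moreover have "c1 \<noteq> 0"
      using sandwich_pmat_scalar_nonzero[OF _ W_carrier W_inv c1] W_carrier by simp
    ultimately show "P1 = P2" using pmat_smult_eq_imp_eq by metis
  qed
  then have "pvalid n (conj_pauli n W P) \<and> (\<exists>c. adj W * pmat n P * W = c \<cdot>\<^sub>m pmat n (conj_pauli n W P))"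
    unfolding conj_pauli_def by (rule theI')
  then show "pvalid n (conj_pauli n W P)"
    and "\<exists>c. adj W * pmat n P * W = c \<cdot>\<^sub>m pmat n (conj_pauli n W P)" by simp_all
qed

lemma conj_pauli_pmul:
  assumes W: "clifford_unitary n W" and P: "pvalid n P" and Q: "pvalid n Q"
  shows "conj_pauli n W (pmul P Q) = pmul (conj_pauli n W P) (conj_pauli n W Q)"
proof -
  let ?N = "2 ^ n :: nat"
  let ?P' = "conj_pauli n W P" and ?Q' = "conj_pauli n W Q" and ?R = "conj_pauli n W (pmul P Q)"
  have W_carrier: "W \<in> carrier_mat ?N ?N" and adj_W: "adj W \<in> carrier_mat ?N ?N"
    and W_inv: "W * adj W = 1\<^sub>m ?N"
    using W by (simp_all add: clifford_unitary_def)
  obtain c1 where c1: "adj W * pmat n P * W = c1 \<cdot>\<^sub>m pmat n ?P'"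
    using conj_pauli(2)[OF W P] by blast
  obtain c2 where c2: "adj W * pmat n Q * W = c2 \<cdot>\<^sub>m pmat n ?Q'"
    using conj_pauli(2)[OF W Q] by blast
  obtain c3 where c3: "adj W * pmat n (pmul P Q) * W = c3 \<cdot>\<^sub>m pmat n ?R"
    using conj_pauli(2)[OF W pvalid_pmul[OF P Q]] by blast
  let ?e = "pmul_phase n P Q" and ?e' = "pmul_phase n ?P' ?Q'"
  have "(?e * c3) \<cdot>\<^sub>m pmat n ?R = ?e \<cdot>\<^sub>m (adj W * pmat n (pmul P Q) * W)"
    by (simp add: c3 smult_smult_mat)
  also have "\<dots> = adj W * (pmat n P * pmat n Q) * W"
    unfolding pmat_mult_pmat by (rule sandwich_smult[OF adj_W pmat_carrier W_carrier, symmetric])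
  also have "\<dots> = (c1 \<cdot>\<^sub>m pmat n ?P') * (c2 \<cdot>\<^sub>m pmat n ?Q')"
    unfolding sandwich_mult[OF adj_W W_carrier W_inv pmat_carrier pmat_carrier] c1 c2 ..
  also have "\<dots> = (c1 * c2 * ?e') \<cdot>\<^sub>m pmat n (pmul ?P' ?Q')"
    unfolding smult_mult_smult_mat[OF pmat_carrier pmat_carrier] pmat_mult_pmat smult_smult_mat ..
  finally have "(?e * c3) \<cdot>\<^sub>m pmat n ?R = (c1 * c2 * ?e') \<cdot>\<^sub>m pmat n (pmul ?P' ?Q')" .
  moreover have "c3 \<noteq> 0"
    using sandwich_pmat_scalar_nonzero[OF adj_W W_carrier W_inv c3] .
  ultimately show ?thesis
    using pmat_smult_eq_imp_eq pmul_phase_nonzero conj_pauli(1) W P Q pvalid_pmul by (metis mult_eq_0_iff)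
qed

section \<open>The stabilizer group\<close>

lemma pvalid_bc_rev:
  assumes "\<And>l. clifford_unitary n (level_unitary n C l)" and "\<And>h. pvalid n (F h)"
  shows "pvalid n (bc_rev n C F k)"
  by (induction k) (simp_all add: assms pvalid_pmul conj_pauli(1))

lemma bc_rev_fmul:
  assumes U: "\<And>l. clifford_unitary n (level_unitary n C l)"
    and F: "\<And>h. pvalid n (F h)" and G: "\<And>h. pvalid n (G h)"
  shows "bc_rev n C (fmul F G) k = pmul (bc_rev n C F k) (bc_rev n C G k)"
proof (induction k)
  case 0
  then show ?case by (simp add: fmul_def)
next
  case (Suc k)
  then show ?case
    by (simp add: fmul_def conj_pauli_pmul U pvalid_bc_rev[OF U F] pvalid_bc_rev[OF U G])
      (auto simp: pmul_def)
qed

lemma back_cum_fmul: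
  assumes "\<And>l. clifford_unitary n (level_unitary n C l)"
    and "\<And>h. pvalid n (F h)" and "\<And>h. pvalid n (G h)"
  shows "back_cum n C (fmul F G) = fmul (back_cum n C F) (back_cum n C G)"
  using bc_rev_fmul[OF assms] by (auto simp: back_cum_def fmul_def pmul_def pid_def)

definition meas_fault :: "(nat \<times> bool \<times> pauli) list \<Rightarrow> bool list \<Rightarrow> fault" where
  "meas_fault ms u = foldr (\<lambda>((l, s, P), b) F.
       if b then (\<lambda>h. if h = l - 1 then pmul P (F h) else F h) else F) (zip ms u) fid"

lemma fault_of_eq_meas_fault: "fault_of C u = meas_fault (meas_list C) u"
  by (simp add: fault_of_def meas_fault_def)

lemma meas_fault_Cons:
  "meas_fault ((l, s, P) # ms) (b # u) =
     (if b then (\<lambda>h. if h = l - 1 then pmul P (meas_fault ms u h) else meas_fault ms u h)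
      else meas_fault ms u)"
  unfolding meas_fault_def by simp

lemma meas_fault_xor:
  "length u = length ms \<Longrightarrow> length v = length ms \<Longrightarrow>
     meas_fault ms (map2 (\<noteq>) u v) = fmul (meas_fault ms u) (meas_fault ms v)"
proof (induction ms arbitrary: u v)
  case Nil
  then show ?case by (simp add: meas_fault_def fmul_def fid_def pid_def pmul_def)
next
  case (Cons m ms)
  then obtain a u' b v' where "u = a # u'" "v = b # v'" "length u' = length ms" "length v' = length ms"
    by (auto simp: length_Suc_conv)
  moreover obtain l s P where "m = (l, s, P)" by (cases m)
  ultimately show ?case
    using Cons.IH by (auto simp: meas_fault_Cons fmul_def pmul_def fun_eq_iff)
qed

lemma pvalid_meas_fault:
  "\<forall>(l, s, P) \<in> set ms. pvalid n P \<Longrightarrow> pvalid n (meas_fault ms u h)"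
proof (induction ms arbitrary: u h)
  case Nil
  then show ?case by (simp add: meas_fault_def fid_def pid_def pvalid_def)
next
  case (Cons m ms)
  obtain l s P where m: "m = (l, s, P)" by (cases m)
  show ?case
  proof (cases u)
    case Nil
    then show ?thesis by (simp add: meas_fault_def fid_def pid_def pvalid_def)
  next
    case (Cons b u')
    with Cons.IH Cons.prems m show ?thesis by (auto simp: meas_fault_Cons intro: pvalid_pmul)
  qed
qed

lemma pvalid_meas_list:
  assumes "wf_circuit n C" and "(l, s, P) \<in> set (meas_list C)"
  shows "pvalid n P"
proof -
  from assms(2) obtain l' g where lg: "(l', g) \<in> set C"
    and "(l, s, P) \<in> set (case g of Meas s P \<Rightarrow> [(l', s, P)] | Gate T U \<Rightarrow> [])"
    unfolding meas_list_def by auto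
  then have "g = Meas s P" by (cases g) auto
  with lg assms(1) show ?thesis unfolding wf_circuit_def by fastforce
qed

lemma perp_xor:
  assumes u: "u \<in> perp m Oc" and v: "v \<in> perp m Oc"
  shows "map2 (\<noteq>) u v \<in> perp m Oc"
proof -
  have lengths: "length u = m" "length v = m" using u v by (auto simp: perp_def)
  have "even (card {i. i < m \<and> map2 (\<noteq>) u v ! i \<and> w ! i})" if "w \<in> Oc" for w
  proof -
    have "{i. i < m \<and> map2 (\<noteq>) u v ! i \<and> w ! i} = {i. i < m \<and> ((u ! i \<and> w ! i) \<noteq> (v ! i \<and> w ! i))}"
      using lengths by auto
    moreover have "even (card {i. i < m \<and> u ! i \<and> w ! i})" "even (card {i. i < m \<and> v ! i \<and> w ! i})"
      using u v that by (auto simp: perp_def)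
    ultimately show ?thesis by (simp only: even_card_xor)
  qed
  with lengths show ?thesis by (simp add: perp_def)
qed

lemma replicate_False_mem_perp: "replicate m False \<in> perp m Oc"
proof -
  have no_support: "{i. i < m \<and> replicate m False ! i \<and> w ! i} = {}" for w :: "bool list"
    by auto
  show ?thesis unfolding perp_def mem_Collect_eq no_support by simp
qed

lemma fmul_mem_stabilizers:
  assumes wf: "wf_circuit n C" and s: "s \<in> stabilizers n C" and t: "t \<in> stabilizers n C"
  shows "fmul s t \<in> stabilizers n C"
proof -
  let ?m = "length (meas_list C)" and ?O = "outcome_code n C"
  obtain u v where u: "s = back_cum n C (fault_of C u)" "u \<in> perp ?m ?O"
    and v: "t = back_cum n C (fault_of C v)" "v \<in> perp ?m ?O"
    using s t by (auto simp: stabilizers_def)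
  have "\<And>l. clifford_unitary n (level_unitary n C l)"
    using wf by (intro clifford_unitary_level_unitary) (auto simp: wf_circuit_def)
  moreover have "\<And>u h. pvalid n (fault_of C u h)"
    using pvalid_meas_list[OF wf] by (auto simp: fault_of_eq_meas_fault intro: pvalid_meas_fault)
  moreover have "fault_of C (map2 (\<noteq>) u v) = fmul (fault_of C u) (fault_of C v)"
    unfolding fault_of_eq_meas_fault using u(2) v(2) by (intro meas_fault_xor) (simp_all add: perp_def)
  ultimately have "fmul s t = back_cum n C (fault_of C (map2 (\<noteq>) u v))"
    by (simp add: u(1) v(1) back_cum_fmul)
  with perp_xor[OF u(2) v(2)] show ?thesis
    unfolding stabilizers_def by blast
qed

lemma fid_mem_stabilizers:
  assumes "wf_circuit n C"
  shows "fid \<in> stabilizers n C"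
proof -
  let ?s = "back_cum n C (fault_of C (replicate (length (meas_list C)) False))"
  have "?s \<in> stabilizers n C"
    unfolding stabilizers_def using replicate_False_mem_perp by blast
  moreover have "fmul ?s ?s = fid"
    by (simp add: fmul_def pmul_def fid_def pid_def)
  ultimately show ?thesis
    using fmul_mem_stabilizers[OF assms] by metis
qed

lemma gen_subgroup_subset:
  assumes "fid \<in> G" and "\<And>s t. s \<in> G \<Longrightarrow> t \<in> G \<Longrightarrow> fmul s t \<in> G" and "S \<subseteq> G"
  shows "gen_subgroup S \<subseteq> G"
proof
  fix s assume "s \<in> gen_subgroup S"
  then show "s \<in> G" by induction (use assms in auto)
qed

lemma gen_subgroup_stabilizers:
  "wf_circuit n C \<Longrightarrow> S \<subseteq> stabilizers n C \<Longrightarrow> gen_subgroup S \<subseteq> stabilizers n C"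
  by (intro gen_subgroup_subset fid_mem_stabilizers) (simp_all add: fmul_mem_stabilizers)

lemma mem_gen_subgroup: "s \<in> S \<Longrightarrow> s \<in> gen_subgroup S"
  using gen_subgroup.gen_mul[OF _ gen_subgroup.gen_id, of s S]
  by (simp add: fmul_def pmul_def fid_def pid_def)

section \<open>Radius of a connected graph\<close>

locale connected_graph =
  fixes S :: "'a set" and R :: "('a \<times> 'a) set"
  assumes finite_vertices: "finite S" and nonempty: "S \<noteq> {}" and edges_in: "R \<subseteq> S \<times> S"
    and symmetric: "sym R" and connected: "\<And>x y. x \<in> S \<Longrightarrow> y \<in> S \<Longrightarrow> (x, y) \<in> R\<^sup>*"
begin

definition hop_dist :: "'a \<Rightarrow> 'a \<Rightarrow> nat" where
  "hop_dist x y = (LEAST k. (x, y) \<in> R ^^ k)"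

definition ecc :: "'a \<Rightarrow> nat" where
  "ecc x = Max (hop_dist x ` S)"

lemma relpow_hop_dist: "x \<in> S \<Longrightarrow> y \<in> S \<Longrightarrow> (x, y) \<in> R ^^ hop_dist x y"
  unfolding hop_dist_def using connected rtrancl_power by (metis LeastI_ex)

lemma hop_dist_le: "(x, y) \<in> R ^^ k \<Longrightarrow> hop_dist x y \<le> k"
  unfolding hop_dist_def by (rule Least_le)

lemma hop_dist_triangle:
  assumes "x \<in> S" "y \<in> S" "z \<in> S"
  shows "hop_dist x z \<le> hop_dist x y + hop_dist y z"
proof -
  have "(x, z) \<in> R ^^ hop_dist x y O R ^^ hop_dist y z"
    using relpow_hop_dist assms by blast
  then show ?thesis by (simp add: relpow_add hop_dist_le)
qed

lemma relpow_target_mem: "(x, y) \<in> R ^^ k \<Longrightarrow> x \<in> S \<Longrightarrow> y \<in> S"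
  using edges_in by (induction k arbitrary: y) auto

lemma hop_dist_edge: "(x, y) \<in> R \<Longrightarrow> hop_dist y x \<le> 1"
  using symmetric by (intro hop_dist_le) (auto dest: symD)

lemma exists_on_shortest_path:
  assumes "c \<in> S" "w \<in> S" "j \<le> hop_dist c w"
  shows "\<exists>z\<in>S. hop_dist c z = j \<and> hop_dist z w = hop_dist c w - j"
proof -
  have "(c, w) \<in> R ^^ (j + (hop_dist c w - j))"
    using relpow_hop_dist[OF assms(1,2)] assms(3) by simp
  then obtain z where z: "(c, z) \<in> R ^^ j" "(z, w) \<in> R ^^ (hop_dist c w - j)"
    by (auto simp: relpow_add)
  have "z \<in> S" using relpow_target_mem[OF z(1) assms(1)] .
  moreover have "hop_dist c z \<le> j" "hop_dist z w \<le> hop_dist c w - j"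
    using z by (simp_all add: hop_dist_le)
  moreover have "hop_dist c w \<le> hop_dist c z + hop_dist z w"
    using hop_dist_triangle assms \<open>z \<in> S\<close> by blast
  ultimately show ?thesis using assms(3) by (intro bexI[of _ z]) auto
qed

lemma hop_dist_le_ecc: "w \<in> S \<Longrightarrow> hop_dist x w \<le> ecc x"
  unfolding ecc_def using finite_vertices by simp

lemma ecc_le: "(\<And>w. w \<in> S \<Longrightarrow> hop_dist x w \<le> k) \<Longrightarrow> ecc x \<le> k"
  unfolding ecc_def using finite_vertices nonempty by simp

lemma ecc_attained: "\<exists>w\<in>S. hop_dist x w = ecc x"
proof -
  have "Max (hop_dist x ` S) \<in> hop_dist x ` S"
    using finite_vertices nonempty by (intro Max_in) auto
  then obtain w where "w \<in> S" "Max (hop_dist x ` S) = hop_dist x w" by (rule imageE)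
  then show ?thesis unfolding ecc_def by auto
qed

lemma exists_center: "\<exists>c\<in>S. \<forall>y\<in>S. ecc c \<le> ecc y"
proof -
  have "Min (ecc ` S) \<in> ecc ` S"
    using finite_vertices nonempty by (intro Min_in) auto
  then obtain c where "c \<in> S" "Min (ecc ` S) = ecc c" by (rule imageE)
  moreover have "Min (ecc ` S) \<le> ecc y" if "y \<in> S" for y
    using finite_vertices that by (intro Min_le) auto
  ultimately show ?thesis by auto
qed

text \<open>A layer of a center strictly between the center and its farthest vertex cannot be a
  single vertex z: the neighbour of the center on a shortest path towards z would then have
  smaller eccentricity.\<close>
lemma center_layer_card:
  assumes c: "c \<in> S" and central: "\<forall>y\<in>S. ecc c \<le> ecc y" and j: "1 \<le> j" "j < ecc c"
  shows "2 \<le> card {w \<in> S. hop_dist c w = j}"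
proof (rule ccontr)
  let ?D = "{w \<in> S. hop_dist c w = j}"
  assume "\<not> 2 \<le> card ?D"
  moreover obtain x where x: "x \<in> S" "hop_dist c x = ecc c" using ecc_attained by blast
  then obtain z where z: "z \<in> ?D"
    using exists_on_shortest_path[OF c x(1), of j] j by auto
  moreover have "finite ?D" using finite_vertices by simp
  ultimately have single: "z' = z" if "z' \<in> ?D" for z'
    using that card_le_Suc0_iff_eq[of ?D] by fastforce
  from z obtain u where u: "u \<in> S" "hop_dist c u = 1" "hop_dist u z = j - 1"
    using exists_on_shortest_path[OF c, of z 1] j by auto
  have "(c, u) \<in> R" using relpow_hop_dist[OF c u(1)] u(2) by simp
  then have u_c: "hop_dist u c \<le> 1" by (rule hop_dist_edge)
  have "hop_dist u w \<le> ecc c - 1" if w: "w \<in> S" for w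
  proof (cases "j \<le> hop_dist c w")
    case True
    then obtain z' where "z' \<in> ?D" and z'_w: "hop_dist z' w = hop_dist c w - j"
      using exists_on_shortest_path[OF c w] by auto
    then have "hop_dist u w \<le> (j - 1) + (hop_dist c w - j)"
      using hop_dist_triangle[OF u(1) _ w, of z] single z u(3) by auto
    moreover have "hop_dist c w \<le> ecc c" using hop_dist_le_ecc[OF w] .
    ultimately show ?thesis using True j by linarith
  next
    case False
    then show ?thesis
      using hop_dist_triangle[OF u(1) c w] u_c j by linarith
  qed
  then have "ecc u \<le> ecc c - 1" by (rule ecc_le)
  with central u(1) j show False by fastforce
qed

lemma center_ecc_le_half_card:
  assumes c: "c \<in> S" and central: "\<forall>y\<in>S. ecc c \<le> ecc y"
  shows "ecc c \<le> card S div 2"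
proof (cases "ecc c = 0")
  case False
  let ?D = "\<lambda>j. {w \<in> S. hop_dist c w = j}"
  let ?U = "\<Union>j\<in>{1..<ecc c}. ?D j"
  obtain x where x: "x \<in> S" "hop_dist c x = ecc c" using ecc_attained by blast
  have "hop_dist c c = 0" using hop_dist_le[of c c 0] by simp
  have "2 * (ecc c - 1) = (\<Sum>j\<in>{1..<ecc c}. 2)" by simp
  also have "\<dots> \<le> (\<Sum>j\<in>{1..<ecc c}. card (?D j))"
    using center_layer_card[OF c central] by (intro sum_mono) auto
  also have "\<dots> = card ?U"
    using finite_vertices by (intro card_UN_disjoint[symmetric]) auto
  finally have "2 * (ecc c - 1) \<le> card ?U" .
  moreover have "card (insert c (insert x ?U)) = card ?U + 2"
  proof -
    have "c \<notin> ?U" "x \<notin> ?U" "c \<noteq> x" using \<open>hop_dist c c = 0\<close> x False by auto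
    moreover have "finite ?U" using finite_vertices by simp
    ultimately show ?thesis by simp
  qed
  moreover have "card (insert c (insert x ?U)) \<le> card S"
    using finite_vertices c x by (intro card_mono) auto
  ultimately show ?thesis using False by linarith
qed simp

theorem exists_vertex_within_half_card:
  "\<exists>c\<in>S. \<forall>w\<in>S. \<exists>k \<le> card S div 2. (c, w) \<in> R ^^ k"
proof -
  obtain c where c: "c \<in> S" and central: "\<forall>y\<in>S. ecc c \<le> ecc y"
    using exists_center by blast
  have "hop_dist c w \<le> card S div 2" if "w \<in> S" for w
    using hop_dist_le_ecc[OF that, of c] center_ecc_le_half_card[OF c central] by linarith
  with c show ?thesis using relpow_hop_dist by blast
qed

end

section \<open>Supports of connected stabilizers\<close>

lemma relpow_mono:
  fixes R E :: "('a \<times> 'a) set"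
  shows "R \<subseteq> E \<Longrightarrow> R ^^ k \<subseteq> E ^^ k"
  by (induction k) (simp_all add: relcomp_mono)

lemma sym_edges: "sym (edges C)"
  unfolding sym_def edges_def by blast

lemma connected_in_subset_ball:
  assumes S: "S \<subseteq> vertices n C" and conn: "connected_in C S" and "card S \<le> M"
  shows "\<exists>v\<in>vertices n C. S \<subseteq> ball n C v (M div 2)"
proof -
  let ?R = "edges C \<inter> S \<times> S"
  interpret connected_graph S ?R
  proof
    show "finite S" using S by (rule finite_subset) (simp add: vertices_def)
    show "S \<noteq> {}" "\<And>x y. x \<in> S \<Longrightarrow> y \<in> S \<Longrightarrow> (x, y) \<in> ?R\<^sup>*"
      using conn by (simp_all add: connected_in_def)
    show "sym ?R" using sym_edges by (auto simp: sym_def)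
  qed blast
  obtain v where "v \<in> S" and v: "\<forall>w\<in>S. \<exists>k \<le> card S div 2. (v, w) \<in> ?R ^^ k"
    using exists_vertex_within_half_card by blast
  have "S \<subseteq> ball n C v (M div 2)"
  proof
    fix w assume "w \<in> S"
    then obtain k where "k \<le> card S div 2" "(v, w) \<in> ?R ^^ k" using v by blast
    moreover have "?R ^^ k \<subseteq> edges C ^^ k" by (rule relpow_mono) blast
    moreover have "card S div 2 \<le> M div 2" using \<open>card S \<le> M\<close> by (rule div_le_mono)
    ultimately show "w \<in> ball n C v (M div 2)"
      using \<open>w \<in> S\<close> S unfolding ball_def by (intro CollectI conjI exI[of _ k]) auto
  qed
  with \<open>v \<in> S\<close> S show ?thesis by blast
qed

lemma fsupp_subset_ball:
  assumes "connected_in C (fsupp n C s)" and "weight n C s \<le> M"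
  shows "\<exists>v\<in>vertices n C. fsupp n C s \<subseteq> ball n C v (M div 2)"
proof (rule connected_in_subset_ball)
  show "fsupp n C s \<subseteq> vertices n C" by (auto simp: fsupp_def vertices_def)
qed (use assms in \<open>simp_all add: weight_def\<close>)

theorem mainTheorem13:
  fixes n M :: nat and C :: circuit
  assumes "wf_circuit n C"
    and "linear_code (length (meas_list C)) (outcome_code n C)"
    and "0 < M"
  shows "lwsa_output n C M =
    {s \<in> stabilizers n C. connected_in C (fsupp n C s) \<and> weight n C s \<le> M}"
proof -
  define G where "G v = {t \<in> stabilizers n C. fsupp n C t \<subseteq> ball n C v (M div 2)}" for v
  have output_eq: "lwsa_output n C M = (\<Union>v \<in> vertices n C.
      {s \<in> gen_subgroup (G v). weight n C s \<le> M \<and> connected_in C (fsupp n C s)})"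
    unfolding lwsa_output_def G_def ..
  have generated: "gen_subgroup (G v) \<subseteq> stabilizers n C" for v
    using gen_subgroup_stabilizers[OF assms(1)] by (simp add: G_def)
  have generator: "\<exists>v \<in> vertices n C. s \<in> gen_subgroup (G v)"
    if "s \<in> stabilizers n C" "connected_in C (fsupp n C s)" "weight n C s \<le> M" for s
    using fsupp_subset_ball[OF that(2,3)] that(1) by (auto simp: G_def intro: mem_gen_subgroup)
  show ?thesis
  proof (intro equalityI subsetI)
    fix s assume "s \<in> lwsa_output n C M"
    with generated show "s \<in> {s \<in> stabilizers n C. connected_in C (fsupp n C s) \<and> weight n C s \<le> M}"
      unfolding output_eq by blast
  next
    fix s assume "s \<in> {s \<in> stabilizers n C. connected_in C (fsupp n C s) \<and> weight n C s \<le> M}"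
    with generator show "s \<in> lwsa_output n C M"
      unfolding output_eq by blast
  qed
qed

end
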